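(* In the setting below, the quasi-cyclic code $C$ is Hermitian LCD if and only if all of the following hold: (I) $g(x)$ is self-conjugate-reciprocal; (II) $l(x)$ is self-conjugate-reciprocal; (III) $\gcd(t_{22}(x),g_{12}(x))=1$; (IV) $\gcd\big(r_{22}(x),\ g_{11}(x)\hat g_{11}(x)+g_{12}(x)\hat g_{12}(x)\big)=1$.
   Context: Let $q$ be a prime power, $F=\mathbb{F}_{q^2}$, $m\ge1$ with $\gcd(q,m)=1$, and $R=F[x]/\langle x^m-1\rangle$; elements of $R$ are represented by polynomials of degree $<m$ and identified with their coefficient vectors in $F^m$. A quasi-cyclic code of length $2m$ and index $2$ is an $R$-submodule $C\subseteq R^2$. The Hermitian inner product of $(a_1,a_2),(b_1,b_2)\in R^2$ is $\sum_k a_{1,k}b_{1,k}^q+\sum_k a_{2,k}b_{2,k}^q$, where $a_{i,k},b_{i,k}$ are the coefficients of $x^k$; $C^{\perp_h}$ is the dual with respect to it, and $C$ is Hermitian LCD if $C\cap C^{\perp_h}=\{0\}$. For $f=\sum_{k=0}^{d} f_kx^k\in F[x]$ of degree $d$, its conjugate is $f^{[q]}=\sum f_k^qx^k$, its conjugate-reciprocal is $f^{\dagger}(x)=x^{d}f^{[q]}(x^{-1})$, and $f$ is self-conjugate-reciprocal if $f^\dagger=\alpha f$ for some $\alpha\in F$. For $f$ of degree at most $m$, its conjugate transpose is $\hat f(x)=x^m f^{[q]}(x^{-1})$. Suppose $C$ is generated as an $R$-module by $(g_{11}(x),g_{12}(x))$ and $(0,g_{22}(x))$, where $g_{11},g_{12},g_{22}\in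 F[x]$ satisfy: $g_{11}\mid x^m-1$, $g_{22}\mid x^m-1$, $\deg g_{12}<\deg g_{22}$, and $g_{11}g_{22}\mid (x^m-1)g_{12}$. Define $g=\gcd(g_{11},g_{22})$, $l=(x^m-1)/\mathrm{lcm}(g_{11},g_{22})$, $g_{11}=g\,g_{11}'$, $g_{22}=g\,g_{22}'$, $r_{22}=\gcd(g_{22}',g_{22}'^{\dagger})$, $t_{22}=g_{22}'/r_{22}$. *)

theory Defs
  imports "HOL-Computational_Algebra.Computational_Algebra"
begin

definition xm1 :: "nat \<Rightarrow> 'a::field poly" where
  "xm1 m = monom 1 m - 1"

(* conjugate-reciprocal f^dagger(x) = x^(deg f) f^[q](x^-1), conjugation c \<mapsto> c^q *)
definition conj_recip :: "nat \<Rightarrow> 'a::field poly \<Rightarrow> 'a poly" where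
  "conj_recip q f = (\<Sum>k\<le>degree f. monom (coeff f k ^ q) (degree f - k))"

definition self_conj_recip :: "nat \<Rightarrow> 'a::field poly \<Rightarrow> bool" where
  "self_conj_recip q f \<longleftrightarrow> (\<exists>\<alpha>. conj_recip q f = smult \<alpha> f)"

(* conjugate transpose hat f(x) = x^m f^[q](x^-1), for deg f \<le> m *)
definition conj_transpose :: "nat \<Rightarrow> nat \<Rightarrow> 'a::field poly \<Rightarrow> 'a poly" where
  "conj_transpose q m f = (\<Sum>k\<le>m. monom (coeff f k ^ q) (m - k))"

(* R^2, elements of R = F[x]/<x^m-1> represented by polynomials of degree < m *)
definition R2 :: "nat \<Rightarrow> ('a::field poly \<times> 'a poly) set" where
  "R2 m = {(u1, u2). degree u1 < m \<and> degree u2 < m}"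

definition qc_code :: "nat \<Rightarrow> 'a::field poly \<Rightarrow> 'a poly \<Rightarrow> 'a poly \<Rightarrow> ('a poly \<times> 'a poly) set" where
  "qc_code m g11 g12 g22 =
     {((a * g11 + b * 0) mod xm1 m, (a * g12 + b * g22) mod xm1 m) | a b. True}"

definition herm :: "nat \<Rightarrow> nat \<Rightarrow> ('a::field poly \<times> 'a poly) \<Rightarrow> ('a poly \<times> 'a poly) \<Rightarrow> 'a" where
  "herm q m u v = (\<Sum>k<m. coeff (fst u) k * coeff (fst v) k ^ q)
                + (\<Sum>k<m. coeff (snd u) k * coeff (snd v) k ^ q)"

definition herm_dual :: "nat \<Rightarrow> nat \<Rightarrow> ('a::field poly \<times> 'a poly) set \<Rightarrow> ('a poly \<times> 'a poly) set" where
  "herm_dual q m C = {v \<in> R2 m. \<forall>c\<in>C. herm q m c v = 0}"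

definition herm_LCD :: "nat \<Rightarrow> nat \<Rightarrow> ('a::field poly \<times> 'a poly) set \<Rightarrow> bool" where
  "herm_LCD q m C \<longleftrightarrow> C \<inter> herm_dual q m C = {(0, 0)}"

end

theory Submission
  imports Defs "HOL-Number_Theory.Residues"
begin

hide_const (open) up_ring.coeff up_ring.monom module.smult

text \<open>Write \<open>R = F[x]/(x^m - 1)\<close> and \<open>sigma v = v^[q](x^-1)\<close>, a conjugate-linear ring involution
  of \<open>R\<close>. The Hermitian form on \<open>R^2\<close> is the constant term of \<open>u1 sigma(v1) + u2 sigma(v2)\<close>,
  so the codeword \<open>a (g11, g12) + b (0, g22)\<close> lies in the dual of \<open>C\<close> iff \<open>x^m - 1\<close> divides
  \<open>g11 sigma(a g11) + g12 sigma(a g12 + b g22)\<close> and \<open>g22 sigma(a g12 + b g22)\<close>.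
  As \<open>gcd(m, q) = 1\<close>, \<open>x^m - 1\<close> is squarefree, so such divisibilities can be checked one
  irreducible factor \<open>f\<close> at a time, and \<open>sigma\<close> swaps the \<open>f\<close>-component with the
  component at \<open>bar f\<close>, the normalised conjugate-reciprocal of \<open>f\<close>. Multiplying a codeword
  by the cofactor of \<open>f\<close> isolates that pair of components, and a case analysis on how
  \<open>f\<close> and \<open>bar f\<close> divide \<open>g11\<close> and \<open>g22\<close> turns \<open>C \<inter> C^\<bottom> = 0\<close> into the closure of
  \<open>g\<close> and \<open>l\<close> under \<open>f \<mapsto> bar f\<close> together with the two coprimality conditions.\<close>

section \<open>Finite fields and squarefree elements\<close>

lemma finite_field_power_card:
  fixes x :: "'a::{finite,field}"
  shows "x ^ card (UNIV :: 'a set) = x"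
proof (cases "x = 0")
  case False
  define G :: "'a monoid" where "G = \<lparr>carrier = UNIV - {0}, monoid.mult = (*), one = 1\<rparr>"
  interpret G: group G
    by (rule groupI) (auto simp: G_def intro!: bexI[of _ "inverse _"])
  have pow: "y [^]\<^bsub>G\<^esub> n = y ^ n" for y and n :: nat
    by (induction n) (simp_all add: G_def)
  have order: "order G = card (UNIV :: 'a set) - 1"
    by (simp add: order_def G_def card_Diff_singleton)
  have one: "\<one>\<^bsub>G\<^esub> = 1"
    by (simp add: G_def)
  have "x [^]\<^bsub>G\<^esub> order G = \<one>\<^bsub>G\<^esub>"
    by (rule G.pow_order_eq_1) (simp add: G_def False)
  then have "x ^ (card (UNIV :: 'a set) - 1) = 1"
    by (simp only: pow order one)
  moreover have "card (UNIV :: 'a set) = Suc (card (UNIV :: 'a set) - 1)"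
    using finite_UNIV_card_ge_0[where 'a = 'a] by simp
  ultimately show ?thesis
    by (metis mult_1_right power_Suc)
qed (simp add: power_0_left finite_UNIV_card_ge_0)

lemma CHAR_finite_field_prime_power:
  assumes "prime p" and "card (UNIV :: 'a::{finite,field} set) = p ^ k"
  shows "CHAR('a) = p"
proof -
  have "prime CHAR('a)"
    by (rule prime_CHAR_semidom) (simp add: finite_imp_CHAR_pos)
  moreover have "CHAR('a) dvd p ^ k"
    using CHAR_dvd_CARD[where 'a = 'a] assms(2) by simp
  ultimately show ?thesis
    using assms(1) by (meson prime_dvd_power primes_dvd_imp_eq)
qed

lemma frobenius_conjugation:
  fixes x y :: "'a::{finite,field}"
  assumes "q = CHAR('a) ^ e" and "card (UNIV :: 'a set) = q ^ 2"
  shows "(x + y) ^ q = x ^ q + y ^ q" and "(x ^ q) ^ q = x"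
proof -
  have "prime CHAR('a)"
    by (rule prime_CHAR_semidom) (simp add: finite_imp_CHAR_pos)
  then show "(x + y) ^ q = x ^ q + y ^ q"
    using assms(1) by (rule freshmans_dream')
  show "(x ^ q) ^ q = x"
    using finite_field_power_card[of x] assms(2) by (simp add: power_mult power2_eq_square)
qed

lemma of_nat_nonzero_if_coprime_CHAR:
  assumes "coprime CHAR('a::field) m"
  shows "(of_nat m :: 'a) \<noteq> 0"
proof
  assume "(of_nat m :: 'a) = 0"
  then have "CHAR('a) dvd m"
    by (simp add: of_nat_eq_0_iff_char_dvd)
  then have "CHAR('a) = 1"
    using assms by (simp add: coprime_absorb_left)
  then show False
    using of_nat_CHAR[where 'a = 'a] by simp
qed

lemma coprime_iff_no_common_prime_divisor:
  fixes a b :: "'a::factorial_semiring"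
  assumes "a \<noteq> 0"
  shows "coprime a b \<longleftrightarrow> (\<forall>p. prime p \<longrightarrow> p dvd a \<longrightarrow> \<not> p dvd b)"
proof
  show "coprime a b \<Longrightarrow> \<forall>p. prime p \<longrightarrow> p dvd a \<longrightarrow> \<not> p dvd b"
    using coprime_common_divisor not_prime_unit by blast
next
  assume no_common: "\<forall>p. prime p \<longrightarrow> p dvd a \<longrightarrow> \<not> p dvd b"
  show "coprime a b"
  proof (rule coprimeI, rule ccontr)
    fix d assume "d dvd a" and "d dvd b" and "\<not> is_unit d"
    moreover have "d \<noteq> 0"
      using \<open>d dvd a\<close> assms by auto
    ultimately obtain p where "prime p" and "p dvd d"
      using prime_divisor_exists by blast
    then show False
      using no_common \<open>d dvd a\<close> \<open>d dvd b\<close> dvd_trans by blast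
  qed
qed

lemma squarefree_mult_imp_coprime:
  assumes "squarefree (a * b)"
  shows "coprime a b"
proof (rule coprimeI)
  fix d assume "d dvd a" and "d dvd b"
  then have "d ^ 2 dvd a * b"
    by (simp add: power2_eq_square mult_dvd_mono)
  with assms show "is_unit d"
    by (rule squarefreeD)
qed

lemma prime_dvd_coprime_factor_iff:
  fixes x y f :: "'a::factorial_semiring"
  assumes "coprime x y" and "prime f" and "f dvd x * y"
  shows "f dvd y \<longleftrightarrow> \<not> f dvd x"
  using assms prime_dvd_mult_iff[of f x y] coprime_common_divisor[of x y f] not_prime_unit[of f] by blast

lemma squarefree_dvdI:
  fixes d x :: "'a::factorial_semiring"
  assumes "squarefree d" and "\<And>p. prime p \<Longrightarrow> p dvd d \<Longrightarrow> p dvd x"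
  shows "d dvd x"
proof (cases "x = 0")
  case False
  have "d \<noteq> 0"
    using assms(1) by auto
  then show ?thesis
  proof (rule multiplicity_le_imp_dvd)
    fix p :: 'a assume "prime p"
    show "multiplicity p d \<le> multiplicity p x"
    proof (cases "p dvd d")
      case True
      then have "1 \<le> multiplicity p x"
        using assms(2) \<open>prime p\<close> False by (simp add: Suc_le_eq prime_multiplicity_gt_zero_iff)
      moreover have "multiplicity p d \<le> 1"
        using squarefree_factorial_semiring''[OF \<open>d \<noteq> 0\<close>] assms(1) \<open>prime p\<close> by blast
      ultimately show ?thesis
        by linarith
    qed (simp add: not_dvd_imp_multiplicity_0)
  qed
qed simp

lemma coprime_monom_if_coeff_0_nonzero:
  fixes d :: "'a::field_gcd poly"
  assumes "coeff d 0 \<noteq> 0"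
  shows "coprime d (monom 1 k)"
proof -
  have "prime_elem [:0, 1::'a:]"
    using irreducible_linear_field_poly[of 1 0] prime_elem_iff_irreducible by auto
  moreover have "\<not> [:0, 1:] dvd d"
    using assms by (simp add: dvd_iff_poly_eq_0 poly_0_coeff_0)
  ultimately have "coprime d ([:0, 1:] ^ k)"
    by (rule prime_elem_imp_power_coprime)
  then show ?thesis
    by (simp add: monom_altdef)
qed

lemma dvd_monom_mult_iff: "coeff (d::'a::field_gcd poly) 0 \<noteq> 0 \<Longrightarrow> d dvd monom 1 k * a \<longleftrightarrow> d dvd a"
  using coprime_monom_if_coeff_0_nonzero coprime_dvd_mult_right_iff by blast

lemma poly_eq_sum_monom_lessThan:
  fixes u :: "'b::comm_monoid_add poly"
  assumes "degree u < n"
  shows "u = (\<Sum>i<n. monom (coeff u i) i)"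
  using assms poly_as_sum_of_monoms'[of u "n - 1"] by (simp add: lessThan_Suc_atMost[symmetric])

section \<open>The involution of \<open>F[x]/(x^m - 1)\<close>\<close>

locale hermitian_qc =
  fixes q m :: nat and ty :: "'a::{finite,field_gcd} itself"
  assumes power_q_add: "\<And>x y :: 'a. (x + y) ^ q = x ^ q + y ^ q"
    and power_q_power_q: "\<And>x :: 'a. (x ^ q) ^ q = x"
    and m_nonzero: "(of_nat m :: 'a) \<noteq> 0"
begin

abbreviation N :: "'a poly" where "N \<equiv> xm1 m"

lemma m_pos: "m \<ge> 1"
  using m_nonzero by (cases m) auto

lemma q_pos: "q \<ge> 1"
  using power_q_power_q[of 0] by (cases q) auto

definition frob :: "'a \<Rightarrow> 'a" where "frob c = c ^ q"

lemma frob_0 [simp]: "frob 0 = 0"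
  using q_pos by (simp add: frob_def)

lemma frob_1 [simp]: "frob 1 = 1"
  by (simp add: frob_def)

lemma frob_add: "frob (x + y) = frob x + frob y"
  by (simp add: frob_def power_q_add)

lemma frob_mult: "frob (x * y) = frob x * frob y"
  by (simp add: frob_def power_mult_distrib)

lemma frob_frob [simp]: "frob (frob x) = x"
  by (simp add: frob_def power_q_power_q)

lemma frob_minus: "frob (- x) = - frob x"
  using frob_add[of "- x" x] by (simp add: eq_neg_iff_add_eq_0)

lemma frob_eq_0_iff [simp]: "frob x = 0 \<longleftrightarrow> x = 0"
  by (metis frob_frob frob_0)

definition conj_poly :: "'a poly \<Rightarrow> 'a poly" where "conj_poly u = map_poly frob u"

lemma coeff_conj_poly [simp]: "coeff (conj_poly u) n = frob (coeff u n)"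
  by (simp add: conj_poly_def coeff_map_poly)

lemma degree_conj_poly [simp]: "degree (conj_poly u) = degree u"
  unfolding conj_poly_def by (rule degree_map_poly) simp

lemma conj_poly_add: "conj_poly (u + v) = conj_poly u + conj_poly v"
  by (rule poly_eqI) (simp add: frob_add)

lemma conj_poly_minus: "conj_poly (- u) = - conj_poly u"
  by (rule poly_eqI) (simp add: frob_minus)

lemma conj_poly_smult: "conj_poly (smult c u) = smult (frob c) (conj_poly u)"
  by (rule poly_eqI) (simp add: frob_mult)

lemma conj_poly_pCons: "conj_poly (pCons a u) = pCons (frob a) (conj_poly u)"
  by (rule poly_eqI) (simp add: coeff_pCons split: nat.split)

lemma conj_poly_0 [simp]: "conj_poly 0 = 0"
  by (rule poly_eqI) simp

lemma conj_poly_mult: "conj_poly (u * v) = conj_poly u * conj_poly v"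
  by (induction u) (simp_all add: conj_poly_pCons conj_poly_add conj_poly_smult)

lemma conj_poly_conj_poly [simp]: "conj_poly (conj_poly u) = u"
  by (rule poly_eqI) simp

lemma conj_poly_const [simp]: "conj_poly [:c:] = [:frob c:]"
  by (rule poly_eqI) (simp add: coeff_pCons split: nat.split)

lemma conj_poly_monom [simp]: "conj_poly (monom c n) = monom (frob c) n"
  by (rule poly_eqI) (simp add: coeff_monom)

lemma conj_poly_pcompose: "conj_poly (pcompose u v) = pcompose (conj_poly u) (conj_poly v)"
  by (induction u) (simp_all add: pcompose_pCons conj_poly_pCons conj_poly_add conj_poly_mult)

lemma conj_poly_reflect_poly: "conj_poly (reflect_poly u) = reflect_poly (conj_poly u)"
  by (rule poly_eqI) (simp add: coeff_reflect_poly)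

lemma conj_poly_eq_0_iff [simp]: "conj_poly u = 0 \<longleftrightarrow> u = 0"
  by (metis conj_poly_conj_poly conj_poly_0)

text \<open>\<open>x^(m-1)\<close> stands for \<open>x^-1\<close>, so \<open>sigma u\<close> represents \<open>u^[q](x^-1)\<close> modulo \<open>x^m - 1\<close>.\<close>

definition sigma :: "'a poly \<Rightarrow> 'a poly" where
  "sigma u = pcompose (conj_poly u) (monom 1 (m - 1))"

lemma sigma_0 [simp]: "sigma 0 = 0"
  by (simp add: sigma_def)

lemma sigma_1 [simp]: "sigma 1 = 1"
  by (simp add: sigma_def one_pCons)

lemma sigma_add: "sigma (u + v) = sigma u + sigma v"
  by (simp add: sigma_def conj_poly_add pcompose_add)

lemma sigma_minus: "sigma (- u) = - sigma u"
  unfolding sigma_def conj_poly_minus by (rule pcompose_uminus)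

lemma sigma_diff: "sigma (u - v) = sigma u - sigma v"
  unfolding diff_conv_add_uminus sigma_add sigma_minus ..

lemma sigma_mult: "sigma (u * v) = sigma u * sigma v"
  unfolding sigma_def conj_poly_mult by (rule pcompose_mult)

lemma sigma_sum: "sigma (\<Sum>k\<in>A. f k) = (\<Sum>k\<in>A. sigma (f k))"
  by (induction A rule: infinite_finite_induct) (simp_all add: sigma_add)

lemma pcompose_monom_left: "pcompose (monom c n) r = smult c (r ^ n)"
  by (induction n) (simp_all add: monom_0 monom_Suc pcompose_pCons)

lemma sigma_monom: "sigma (monom c n) = monom (frob c) ((m - 1) * n)"
  by (simp add: sigma_def pcompose_monom_left monom_power smult_monom mult.commute)

lemma sigma_eq_sum_monom:
  assumes "degree u \<le> n"
  shows "sigma u = (\<Sum>k\<le>n. monom (frob (coeff u k)) ((m - 1) * k))"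
proof -
  have "sigma u = sigma (\<Sum>k\<le>n. monom (coeff u k) k)"
    using assms by (simp add: poly_as_sum_of_monoms')
  then show ?thesis
    by (simp add: sigma_sum sigma_monom)
qed

lemma N_eq: "N = monom 1 m - 1"
  by (simp add: xm1_def)

lemma coeff_N: "coeff N n = (if n = m then 1 else if n = 0 then -1 else 0)"
  using m_pos by (auto simp: N_eq coeff_monom)

lemma N_nonzero: "N \<noteq> 0"
  using coeff_N[of m] by auto

lemma degree_N: "degree N = m"
  using m_pos by (intro antisym le_degree degree_le) (auto simp: coeff_N)

lemma N_dvd_monom_diff_1: "N dvd monom 1 (k * m) - 1"
proof -
  have "monom (1::'a) (k * m) = (monom 1 m) ^ k"
    by (simp add: monom_power mult.commute)
  then show ?thesis
    by (simp add: N_eq power_diff_1_eq)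
qed

lemma N_dvd_monom_diff:
  assumes "i mod m = j mod m"
  shows "N dvd monom c i - monom c j"
proof -
  have reduce: "N dvd monom c n - monom c (n mod m)" for n
  proof -
    have "monom c n = monom c (n mod m) * monom 1 ((n div m) * m)"
      by (simp add: mult_monom)
    then have "monom c n - monom c (n mod m) = monom c (n mod m) * (monom 1 ((n div m) * m) - 1)"
      by (simp add: right_diff_distrib)
    then show ?thesis
      using N_dvd_monom_diff_1 by (metis dvd_mult)
  qed
  have "monom c i - monom c j = (monom c i - monom c (i mod m)) - (monom c j - monom c (j mod m))"
    using assms by simp
  then show ?thesis
    using reduce by (metis dvd_diff)
qed

lemma N_dvd_sum_diff:
  assumes "\<And>k. k \<in> A \<Longrightarrow> N dvd f k - g k"
  shows "N dvd (\<Sum>k\<in>A. f k) - (\<Sum>k\<in>A. g k)"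
  unfolding sum_subtractf[symmetric] using assms by (rule dvd_sum)

lemma dvd_iff_if_dvd_N:
  assumes "d dvd N" and "N dvd a - b"
  shows "d dvd a \<longleftrightarrow> d dvd b"
proof -
  have "d dvd (a - b) + b \<longleftrightarrow> d dvd b"
    using dvd_trans[OF assms] by (rule dvd_add_right_iff)
  then show ?thesis
    by simp
qed

lemma N_dvd_pcompose_diff:
  assumes "N dvd a - b"
  shows "N dvd pcompose u a - pcompose u b"
proof (induction u)
  case (pCons c u)
  have "pcompose (pCons c u) a - pcompose (pCons c u) b
        = a * (pcompose u a - pcompose u b) + (a - b) * pcompose u b"
    by (simp add: pcompose_pCons algebra_simps)
  then show ?case
    using pCons assms by (metis dvd_add dvd_mult dvd_mult2)
qed simp

lemma N_dvd_sigma_N: "N dvd sigma N"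
proof -
  have "sigma N = monom 1 ((m - 1) * m) - 1"
    by (simp add: N_eq sigma_diff sigma_monom)
  then show ?thesis
    using N_dvd_monom_diff_1 by (metis mult.commute)
qed

lemma N_dvd_sigma_diff:
  assumes "N dvd a - b"
  shows "N dvd sigma a - sigma b"
proof -
  obtain k where "a - b = N * k"
    using assms by (auto elim: dvdE)
  then have "sigma a - sigma b = sigma N * sigma k"
    by (metis sigma_diff sigma_mult)
  then show ?thesis
    using N_dvd_sigma_N by simp
qed

lemma N_dvd_sigma_sigma: "N dvd sigma (sigma u) - u"
proof -
  have "sigma (sigma u) = pcompose u (pcompose (monom 1 (m - 1)) (monom 1 (m - 1)))"
    by (simp add: sigma_def conj_poly_pcompose pcompose_assoc)
  also have "pcompose (monom 1 (m - 1)) (monom (1::'a) (m - 1)) = monom 1 ((m - 1) * (m - 1))"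
    by (simp add: pcompose_monom_left monom_power)
  finally have sigma_sigma: "sigma (sigma u) = pcompose u (monom 1 ((m - 1) * (m - 1)))" .
  have "((m - 1) * (m - 1)) mod m = 1 mod m"
  proof (cases "m \<ge> 2")
    case True
    then obtain k where "m = k + 2"
      using le_Suc_ex by (metis add.commute)
    then have "(m - 1) * (m - 1) = 1 + k * m"
      by (simp add: algebra_simps)
    then show ?thesis
      by (simp only: mod_mult_self1)
  qed (use m_pos in \<open>simp add: le_antisym\<close>)
  then have "N dvd monom 1 ((m - 1) * (m - 1)) - monom 1 1"
    by (rule N_dvd_monom_diff)
  then have "N dvd pcompose u (monom 1 ((m - 1) * (m - 1))) - pcompose u [:0, 1:]"
    by (intro N_dvd_pcompose_diff) (simp add: monom_Suc monom_0)
  then show ?thesis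
    by (simp only: sigma_sigma pcompose_idR)
qed

lemma conj_recip_eq_reflect_poly: "conj_recip q f = reflect_poly (conj_poly f)"
proof (rule poly_eqI)
  fix n
  let ?d = "degree f"
  have "coeff (conj_recip q f) n = (\<Sum>k\<le>?d. if ?d - k = n then coeff f k ^ q else 0)"
    by (simp add: conj_recip_def coeff_sum coeff_monom)
  also have "\<dots> = (\<Sum>k\<le>?d. if k = ?d - n \<and> n \<le> ?d then coeff f k ^ q else 0)"
    by (rule sum.cong) auto
  also have "\<dots> = coeff (reflect_poly (conj_poly f)) n"
    by (cases "n \<le> ?d") (simp_all add: coeff_reflect_poly frob_def)
  finally show "coeff (conj_recip q f) n = coeff (reflect_poly (conj_poly f)) n" .
qed

lemma conj_recip_mult: "conj_recip q (f * g) = conj_recip q f * conj_recip q g" for f g :: "'a poly"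
  by (simp add: conj_recip_eq_reflect_poly conj_poly_mult reflect_poly_mult)

lemma conj_recip_conj_recip: "coeff f 0 \<noteq> 0 \<Longrightarrow> conj_recip q (conj_recip q f) = f" for f :: "'a poly"
  by (simp add: conj_recip_eq_reflect_poly conj_poly_reflect_poly)

lemma degree_conj_recip: "coeff f 0 \<noteq> 0 \<Longrightarrow> degree (conj_recip q f) = degree f" for f :: "'a poly"
  by (simp add: conj_recip_eq_reflect_poly)

lemma conj_recip_eq_0_iff [simp]: "conj_recip q f = 0 \<longleftrightarrow> f = 0" for f :: "'a poly"
  by (simp add: conj_recip_eq_reflect_poly)

lemma conj_recip_N: "conj_recip q N = - N"
proof -
  have "conj_poly N = N"
    by (rule poly_eqI) (simp add: coeff_N frob_minus)
  then show ?thesis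
    unfolding conj_recip_eq_reflect_poly
    by (intro poly_eqI) (use m_pos in \<open>auto simp: coeff_reflect_poly degree_N coeff_N\<close>)
qed

lemma coeff_0_nonzero_if_dvd_N: "d dvd N \<Longrightarrow> coeff d 0 \<noteq> 0"
  using coeff_N[of 0] m_pos by (auto simp flip: poly_0_coeff_0 elim!: dvdE)

lemma conj_recip_dvd_N: "d dvd N \<Longrightarrow> conj_recip q d dvd N"
  by (metis conj_recip_N conj_recip_mult dvd_def dvd_minus_iff)

lemma sigma_cong_conj_recip: "N dvd sigma u - monom 1 ((m - 1) * degree u) * conj_recip q u"
proof -
  let ?d = "degree u"
  have "monom 1 ((m - 1) * ?d) * conj_recip q u
        = (\<Sum>k\<le>?d. monom (frob (coeff u k)) ((m - 1) * ?d + (?d - k)))"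
    by (simp add: conj_recip_def sum_distrib_left mult_monom frob_def)
  moreover have "N dvd sigma u - (\<Sum>k\<le>?d. monom (frob (coeff u k)) ((m - 1) * ?d + (?d - k)))"
    unfolding sigma_eq_sum_monom[OF order_refl]
  proof (intro N_dvd_sum_diff N_dvd_monom_diff)
    fix k assume "k \<in> {..?d}"
    then obtain j where j: "?d = k + j"
      by (auto dest: le_Suc_ex)
    obtain m' where m': "m = m' + 1"
      using m_pos by (metis le_add_diff_inverse2)
    have "(m - 1) * ?d + (?d - k) = (m - 1) * k + j * m"
      unfolding j m' by (simp add: ring_distribs)
    then show "(m - 1) * k mod m = ((m - 1) * ?d + (?d - k)) mod m"
      by simp
  qed
  ultimately show ?thesis
    by simp
qed

lemma conj_transpose_cong_sigma:
  assumes "degree u \<le> m"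
  shows "N dvd conj_transpose q m u - sigma u"
proof -
  have "conj_transpose q m u = (\<Sum>k\<le>m. monom (frob (coeff u k)) (m - k))"
    by (simp add: conj_transpose_def frob_def)
  moreover have "N dvd (\<Sum>k\<le>m. monom (frob (coeff u k)) (m - k)) - sigma u"
    unfolding sigma_eq_sum_monom[OF assms]
  proof (intro N_dvd_sum_diff N_dvd_monom_diff)
    fix k assume "k \<in> {..m}"
    show "(m - k) mod m = (m - 1) * k mod m"
    proof (cases k)
      case (Suc k')
      then obtain j where j: "m = k + j"
        using \<open>k \<in> {..m}\<close> by (auto dest: le_Suc_ex)
      have "(m - 1) * k = (m - k) + k' * m"
        unfolding j Suc by (simp add: ring_distribs)
      then show ?thesis
        by simp
    qed simp
  qed
  ultimately show ?thesis
    by simp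
qed

lemma dvd_sigma_iff:
  assumes "d dvd N"
  shows "d dvd sigma h \<longleftrightarrow> conj_recip q d dvd h"
proof
  assume "conj_recip q d dvd h"
  then obtain w where h: "h = conj_recip q d * w"
    by (auto elim: dvdE)
  have "conj_recip q (conj_recip q d) = d"
    using assms by (simp add: conj_recip_conj_recip coeff_0_nonzero_if_dvd_N)
  then have "N dvd sigma (conj_recip q d) - monom 1 ((m - 1) * degree (conj_recip q d)) * d"
    using sigma_cong_conj_recip[of "conj_recip q d"] by simp
  then have "d dvd sigma (conj_recip q d)"
    using dvd_iff_if_dvd_N[OF assms] by simp
  then show "d dvd sigma h"
    by (simp add: h sigma_mult)
next
  assume "d dvd sigma h"
  then obtain w where w: "sigma h = d * w"
    by (auto elim: dvdE)
  have cr_dvd_N: "conj_recip q d dvd N"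
    using assms by (rule conj_recip_dvd_N)
  then have "conj_recip q d dvd sigma d"
    using dvd_iff_if_dvd_N[OF _ sigma_cong_conj_recip[of d]] by simp
  then have "conj_recip q d dvd sigma (sigma h)"
    by (simp add: w sigma_mult)
  then show "conj_recip q d dvd h"
    using dvd_iff_if_dvd_N[OF cr_dvd_N N_dvd_sigma_sigma] by simp
qed

lemma dvd_conj_recip_iff:
  assumes "d dvd N"
  shows "d dvd conj_recip q h \<longleftrightarrow> conj_recip q d dvd h"
proof -
  have "d dvd conj_recip q h \<longleftrightarrow> d dvd monom 1 ((m - 1) * degree h) * conj_recip q h"
    using assms by (simp add: dvd_monom_mult_iff coeff_0_nonzero_if_dvd_N)
  also have "\<dots> \<longleftrightarrow> d dvd sigma h"
    using dvd_iff_if_dvd_N[OF assms sigma_cong_conj_recip[of h]] by simp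
  finally show ?thesis
    using dvd_sigma_iff[OF assms] by simp
qed

lemma squarefree_N: "squarefree N"
proof (rule squarefreeI)
  fix f assume "f ^ 2 dvd N"
  then obtain g where g: "N = f * f * g"
    by (auto simp: power2_eq_square elim: dvdE)
  then have "pderiv N = f * (f * pderiv g + 2 * (g * pderiv f))"
    by (simp add: pderiv_mult algebra_simps)
  moreover have "pderiv N = smult (of_nat m) (monom 1 (m - 1))"
    by (simp add: N_eq pderiv_diff pderiv_monom smult_monom)
  ultimately have "f dvd monom 1 (m - 1) * 1"
    using m_nonzero by (metis dvd_smult_iff dvd_triv_left mult_1_right)
  moreover have "coeff f 0 \<noteq> 0"
    using g by (intro coeff_0_nonzero_if_dvd_N) (simp add: mult.assoc)
  ultimately show "f dvd 1"
    using dvd_monom_mult_iff by blast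
qed

definition bar :: "'a poly \<Rightarrow> 'a poly" where "bar f = normalize (conj_recip q f)"

lemma bar_dvd_iff: "bar f dvd h \<longleftrightarrow> conj_recip q f dvd h"
  by (simp add: bar_def)

context
  fixes f :: "'a poly"
  assumes prime_f: "prime f" and f_dvd_N: "f dvd N"
begin

lemma bar_dvd_N: "bar f dvd N"
  using conj_recip_dvd_N[OF f_dvd_N] by (simp add: bar_dvd_iff)

lemma dvd_sigma_iff_bar_dvd: "f dvd sigma h \<longleftrightarrow> bar f dvd h"
  using dvd_sigma_iff[OF f_dvd_N] by (simp add: bar_dvd_iff)

lemma dvd_conj_recip_iff_bar_dvd: "f dvd conj_recip q h \<longleftrightarrow> bar f dvd h"
  using dvd_conj_recip_iff[OF f_dvd_N] by (simp add: bar_dvd_iff)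

lemma bar_dvd_sigma_iff: "bar f dvd sigma h \<longleftrightarrow> f dvd h"
proof -
  have "conj_recip q (conj_recip q f) = f"
    using f_dvd_N by (simp add: conj_recip_conj_recip coeff_0_nonzero_if_dvd_N)
  then show ?thesis
    using dvd_sigma_iff[OF conj_recip_dvd_N[OF f_dvd_N]] by (simp add: bar_dvd_iff)
qed

lemma prime_bar: "prime (bar f)"
proof -
  have "bar f \<noteq> 0"
    using bar_dvd_N N_nonzero by auto
  moreover have "\<not> is_unit (bar f)"
    using bar_dvd_sigma_iff[of 1] prime_f by (auto simp: prime_def prime_elem_def)
  moreover have "bar f dvd a \<or> bar f dvd b" if "bar f dvd a * b" for a b
  proof -
    have "f dvd sigma a * sigma b"
      using that by (simp add: dvd_sigma_iff_bar_dvd flip: sigma_mult)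
    then show ?thesis
      using prime_f by (simp add: prime_dvd_mult_iff dvd_sigma_iff_bar_dvd)
  qed
  ultimately show ?thesis
    by (simp add: prime_def prime_elem_def bar_def)
qed

lemma bar_bar: "bar (bar f) = f"
proof -
  have dvd_iff: "bar (bar f) dvd h \<longleftrightarrow> f dvd h" for h
    by (simp only: bar_dvd_iff[of "bar f"] dvd_sigma_iff[OF bar_dvd_N, symmetric] bar_dvd_sigma_iff)
  show ?thesis
  proof (rule associated_eqI)
    show "bar (bar f) dvd f"
      using dvd_iff[of f] by simp
    show "f dvd bar (bar f)"
      using dvd_iff[of "bar (bar f)"] by simp
    show "normalize (bar (bar f)) = bar (bar f)" and "normalize f = f"
      using prime_f by (simp_all add: bar_def prime_def)
  qed
qed

end

section \<open>The Hermitian form and the hull of the code\<close>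

lemma degree_mod_N_less: "degree (a mod N) < m"
  using degree_mod_less[OF N_nonzero, of a] degree_N m_pos by auto

lemma mod_N_eqI:
  assumes "N dvd a - b" and "degree b < m"
  shows "a mod N = b"
proof -
  have "a mod N = b mod N"
    using assms(1) by (simp add: mod_eq_dvd_iff)
  also have "b mod N = b"
    using assms(2) degree_N by (simp add: mod_poly_less)
  finally show ?thesis .
qed

lemma N_dvd_conj_transpose_mod_N_sigma: "N dvd conj_transpose q m (a mod N) - sigma a"
proof -
  have "N dvd conj_transpose q m (a mod N) - sigma (a mod N)"
    using degree_mod_N_less[of a] by (intro conj_transpose_cong_sigma) simp
  moreover have "N dvd sigma (a mod N) - sigma a"
    using mod_eq_dvd_iff[of "a mod N" N a] by (intro N_dvd_sigma_diff) simp
  ultimately have "N dvd (conj_transpose q m (a mod N) - sigma (a mod N)) + (sigma (a mod N) - sigma a)"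
    by (rule dvd_add)
  then show ?thesis
    by simp
qed

definition const_term :: "'a poly \<Rightarrow> 'a" where "const_term a = coeff (a mod N) 0"

lemma const_term_add: "const_term (a + b) = const_term a + const_term b"
  by (simp add: const_term_def poly_mod_add_left)

lemma const_term_0 [simp]: "const_term 0 = 0"
  by (simp add: const_term_def)

lemma const_term_sum: "const_term (\<Sum>i\<in>A. f i) = (\<Sum>i\<in>A. const_term (f i))"
  by (induction A rule: infinite_finite_induct) (simp_all add: const_term_add)

lemma const_term_mod_mult: "const_term (a mod N * b) = const_term (a * b)"
  by (simp add: const_term_def mod_mult_left_eq)

lemma const_term_N_dvd: "N dvd a \<Longrightarrow> const_term a = 0"
  by (simp add: const_term_def dvd_eq_mod_eq_0)

lemma const_term_monom: "const_term (monom c n) = (if n mod m = 0 then c else 0)"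
proof -
  have "degree (monom c (n mod m)) < m"
    using m_pos by (intro le_less_trans[OF degree_monom_le]) simp
  then have "monom c n mod N = monom c (n mod m)"
    by (intro mod_N_eqI N_dvd_monom_diff) simp
  then show ?thesis
    by (simp add: const_term_def coeff_monom)
qed

lemma add_diff_mod_eq_0_iff:
  assumes "i < m" and "j < m"
  shows "(i + (m - j)) mod m = 0 \<longleftrightarrow> i = j"
proof (cases i j rule: linorder_cases)
  case greater
  then have "i + (m - j) = (i - j) + 1 * m"
    using assms by simp
  then show ?thesis
    using assms greater by (simp only: mod_mult_self1) simp
qed (use assms in simp_all)

lemma const_term_monom_mult:
  assumes "degree u < m" and "j < m"
  shows "const_term (monom 1 (m - j) * u) = coeff u j"
proof -
  have "monom 1 (m - j) * u = (\<Sum>i<m. monom (coeff u i) (i + (m - j)))"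
    by (subst poly_eq_sum_monom_lessThan[OF assms(1)]) (simp add: sum_distrib_left mult_monom add.commute)
  then have "const_term (monom 1 (m - j) * u) = (\<Sum>i<m. if (i + (m - j)) mod m = 0 then coeff u i else 0)"
    by (simp only: const_term_sum const_term_monom)
  also have "\<dots> = (\<Sum>i<m. if i = j then coeff u i else 0)"
    by (intro sum.cong refl) (use add_diff_mod_eq_0_iff assms(2) in auto)
  finally show ?thesis
    using assms(2) by simp
qed

lemma const_term_smult: "const_term (smult c a) = c * const_term a"
  by (simp add: const_term_def mod_smult_left)

lemma const_term_mult_conj_transpose:
  assumes "degree u < m" and "degree v < m"
  shows "const_term (u * conj_transpose q m v) = (\<Sum>k<m. coeff u k * coeff v k ^ q)"
proof -
  have "conj_transpose q m v = (\<Sum>k<m. smult (coeff v k ^ q) (monom 1 (m - k)))"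
    using assms(2) q_pos
    by (simp add: conj_transpose_def lessThan_Suc_atMost[symmetric] coeff_eq_0 smult_monom)
  then have "u * conj_transpose q m v = (\<Sum>k<m. smult (coeff v k ^ q) (monom 1 (m - k) * u))"
    by (simp add: mult.commute[of u] sum_distrib_right)
  then have "const_term (u * conj_transpose q m v) = (\<Sum>k<m. coeff v k ^ q * const_term (monom 1 (m - k) * u))"
    by (simp add: const_term_sum const_term_smult)
  also have "\<dots> = (\<Sum>k<m. coeff u k * coeff v k ^ q)"
    by (intro sum.cong refl) (simp add: const_term_monom_mult assms(1))
  finally show ?thesis .
qed

lemma N_dvd_if_const_term_mult_eq_0:
  assumes "\<And>a. const_term (a * w) = 0"
  shows "N dvd w"
proof -
  have "coeff (w mod N) j = 0" for j
  proof (cases "j < m")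
    case True
    have "coeff (w mod N) j = const_term (monom 1 (m - j) * (w mod N))"
      using degree_mod_N_less True by (simp add: const_term_monom_mult)
    also have "\<dots> = const_term (w * monom 1 (m - j))"
      by (simp add: mult.commute[of "monom 1 (m - j)"] const_term_mod_mult)
    also have "\<dots> = 0"
      using assms[of "monom 1 (m - j)"] by (simp add: mult.commute)
    finally show ?thesis .
  qed (use degree_mod_N_less[of w] in \<open>simp add: coeff_eq_0\<close>)
  then show ?thesis
    by (simp add: dvd_eq_mod_eq_0 poly_eq_iff)
qed

lemma herm_codeword:
  assumes "degree v1 < m" and "degree v2 < m"
  shows "herm q m ((a * g11 + b * 0) mod N, (a * g12 + b * g22) mod N) (v1, v2)
       = const_term (a * (g11 * conj_transpose q m v1 + g12 * conj_transpose q m v2)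
                     + b * (g22 * conj_transpose q m v2))"
proof -
  have "herm q m ((a * g11 + b * 0) mod N, (a * g12 + b * g22) mod N) (v1, v2)
       = const_term ((a * g11) mod N * conj_transpose q m v1)
         + const_term ((a * g12 + b * g22) mod N * conj_transpose q m v2)"
    using assms degree_mod_N_less by (simp add: herm_def const_term_mult_conj_transpose)
  also have "\<dots> = const_term (a * g11 * conj_transpose q m v1 + (a * g12 + b * g22) * conj_transpose q m v2)"
    by (simp only: const_term_mod_mult const_term_add)
  finally show ?thesis
    by (simp add: algebra_simps)
qed

lemma orthogonal_to_qc_code_iff:
  assumes "degree v1 < m" and "degree v2 < m"
  shows "(\<forall>c\<in>qc_code m g11 g12 g22. herm q m c (v1, v2) = 0) \<longleftrightarrow>
     N dvd g11 * conj_transpose q m v1 + g12 * conj_transpose q m v2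
     \<and> N dvd g22 * conj_transpose q m v2"
    (is "?orth \<longleftrightarrow> N dvd ?w \<and> N dvd ?z")
proof
  assume ?orth
  have "const_term (a * ?w + b * ?z) = 0" for a b
  proof -
    have "((a * g11 + b * 0) mod N, (a * g12 + b * g22) mod N) \<in> qc_code m g11 g12 g22"
      unfolding qc_code_def by blast
    with \<open>?orth\<close> show ?thesis
      by (simp only: herm_codeword[OF assms, symmetric])
  qed
  from this[of _ 0] this[of 0] show "N dvd ?w \<and> N dvd ?z"
    by (auto intro: N_dvd_if_const_term_mult_eq_0)
next
  assume "N dvd ?w \<and> N dvd ?z"
  show ?orth
  proof
    fix c assume "c \<in> qc_code m g11 g12 g22"
    then obtain a b where "c = ((a * g11 + b * 0) mod N, (a * g12 + b * g22) mod N)"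
      unfolding qc_code_def by blast
    moreover have "N dvd a * ?w + b * ?z"
      using \<open>N dvd ?w \<and> N dvd ?z\<close> by simp
    ultimately show "herm q m c (v1, v2) = 0"
      by (simp only: herm_codeword[OF assms] const_term_N_dvd)
  qed
qed

definition hull_trivial :: "'a poly \<Rightarrow> 'a poly \<Rightarrow> 'a poly \<Rightarrow> bool" where
  "hull_trivial g11 g12 g22 \<longleftrightarrow> (\<forall>a b.
     N dvd g11 * sigma (a * g11) + g12 * sigma (a * g12 + b * g22) \<and> N dvd g22 * sigma (a * g12 + b * g22)
     \<longrightarrow> N dvd a * g11 \<and> N dvd a * g12 + b * g22)"

lemma codeword_in_herm_dual_iff:
  "((a * g11 + b * 0) mod N, (a * g12 + b * g22) mod N) \<in> herm_dual q m (qc_code m g11 g12 g22)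
   \<longleftrightarrow> N dvd g11 * sigma (a * g11) + g12 * sigma (a * g12 + b * g22)
       \<and> N dvd g22 * sigma (a * g12 + b * g22)"
proof -
  let ?u = "a * g11" and ?v = "a * g12 + b * g22"
  let ?ct = "conj_transpose q m"
  have first: "N dvd (g11 * ?ct (?u mod N) + g12 * ?ct (?v mod N)) - (g11 * sigma ?u + g12 * sigma ?v)"
  proof -
    have "(g11 * ?ct (?u mod N) + g12 * ?ct (?v mod N)) - (g11 * sigma ?u + g12 * sigma ?v)
        = g11 * (?ct (?u mod N) - sigma ?u) + g12 * (?ct (?v mod N) - sigma ?v)"
      by (simp add: algebra_simps)
    then show ?thesis
      using N_dvd_conj_transpose_mod_N_sigma by (metis dvd_add dvd_mult)
  qed
  have second: "N dvd g22 * ?ct (?v mod N) - g22 * sigma ?v"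
    using N_dvd_conj_transpose_mod_N_sigma by (metis dvd_mult right_diff_distrib)
  have "((a * g11 + b * 0) mod N, ?v mod N) \<in> herm_dual q m (qc_code m g11 g12 g22)
      \<longleftrightarrow> N dvd g11 * ?ct (?u mod N) + g12 * ?ct (?v mod N) \<and> N dvd g22 * ?ct (?v mod N)"
    using orthogonal_to_qc_code_iff[OF degree_mod_N_less degree_mod_N_less]
    by (simp add: herm_dual_def R2_def degree_mod_N_less)
  also have "\<dots> \<longleftrightarrow> N dvd g11 * sigma ?u + g12 * sigma ?v \<and> N dvd g22 * sigma ?v"
    by (simp only: dvd_iff_if_dvd_N[OF dvd_refl first] dvd_iff_if_dvd_N[OF dvd_refl second])
  finally show ?thesis .
qed

lemma herm_LCD_iff_hull_trivial:
  "herm_LCD q m (qc_code m g11 g12 g22) \<longleftrightarrow> hull_trivial g11 g12 g22"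
proof -
  let ?C = "qc_code m g11 g12 g22"
  let ?codeword = "\<lambda>a b. ((a * g11 + b * 0) mod N, (a * g12 + b * g22) mod N)"
  have in_C: "c \<in> ?C \<longleftrightarrow> (\<exists>a b. c = ?codeword a b)" for c
    by (simp add: qc_code_def)
  have codeword_eq_0_iff: "?codeword a b = (0, 0) \<longleftrightarrow> N dvd a * g11 \<and> N dvd a * g12 + b * g22" for a b
    by (simp add: dvd_eq_mod_eq_0)
  have "(0, 0) \<in> ?C"
    unfolding in_C by (intro exI[of _ 0]) simp
  moreover have "(0, 0) \<in> herm_dual q m ?C"
    using m_pos q_pos by (simp add: herm_dual_def R2_def herm_def power_0_left)
  moreover have "?C \<inter> herm_dual q m ?C \<subseteq> {(0, 0)} \<longleftrightarrow> hull_trivial g11 g12 g22"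
  proof
    assume trivial: "?C \<inter> herm_dual q m ?C \<subseteq> {(0, 0)}"
    show "hull_trivial g11 g12 g22"
      unfolding hull_trivial_def
    proof (intro allI impI)
      fix a b
      assume "N dvd g11 * sigma (a * g11) + g12 * sigma (a * g12 + b * g22)
        \<and> N dvd g22 * sigma (a * g12 + b * g22)"
      then have "?codeword a b \<in> herm_dual q m ?C"
        by (simp only: codeword_in_herm_dual_iff)
      moreover have "?codeword a b \<in> ?C"
        using in_C by blast
      ultimately show "N dvd a * g11 \<and> N dvd a * g12 + b * g22"
        using trivial codeword_eq_0_iff by blast
    qed
  next
    assume trivial: "hull_trivial g11 g12 g22"
    show "?C \<inter> herm_dual q m ?C \<subseteq> {(0, 0)}"
    proof
      fix c assume c: "c \<in> ?C \<inter> herm_dual q m ?C"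
      then obtain a b where c_eq: "c = ?codeword a b"
        using in_C by blast
      then have "N dvd g11 * sigma (a * g11) + g12 * sigma (a * g12 + b * g22)
        \<and> N dvd g22 * sigma (a * g12 + b * g22)"
        using c by (simp only: c_eq codeword_in_herm_dual_iff Int_iff)
      then show "c \<in> {(0, 0)}"
        using trivial c_eq codeword_eq_0_iff unfolding hull_trivial_def by blast
    qed
  qed
  ultimately show ?thesis
    unfolding herm_LCD_def by blast
qed

section \<open>Localisation at the prime factors of \<open>x^m - 1\<close>\<close>

lemma coprime_if_mult_dvd_N: "x * y dvd N \<Longrightarrow> coprime x y"
  using squarefree_N squarefree_mono squarefree_mult_imp_coprime by blast

lemma prime_not_dvd_cofactor: "prime f \<Longrightarrow> f dvd N \<Longrightarrow> \<not> f dvd N div f"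
  using coprime_if_mult_dvd_N[of f "N div f"] coprime_common_divisor not_prime_unit by force

lemma N_dvd_sigma_cofactor_mult:
  assumes "prime f" and "f dvd N" and "bar f dvd y"
  shows "N dvd sigma (N div f) * y"
proof (rule squarefree_dvdI[OF squarefree_N])
  fix h assume "prime h" and "h dvd N"
  show "h dvd sigma (N div f) * y"
  proof (cases "h = bar f")
    case False
    then have "bar h \<noteq> f"
      using bar_bar \<open>prime h\<close> \<open>h dvd N\<close> by metis
    then have "\<not> bar h dvd f"
      using \<open>prime h\<close> \<open>h dvd N\<close> assms(1) prime_bar primes_dvd_imp_eq by blast
    moreover have "bar h dvd f * (N div f)"
      using \<open>prime h\<close> \<open>h dvd N\<close> assms(2) bar_dvd_N by simp
    ultimately have "bar h dvd N div f"
      using \<open>prime h\<close> \<open>h dvd N\<close> prime_bar prime_dvd_mult_iff by blast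
    then show ?thesis
      using \<open>prime h\<close> \<open>h dvd N\<close> by (simp add: dvd_sigma_iff_bar_dvd)
  qed (use assms(3) in simp)
qed

lemma hull_congruence_witness:
  fixes g11 g12 g22 :: "'a poly"
  defines "a \<equiv> - g22 * sigma g12" and "b \<equiv> g11 * sigma g11 + g12 * sigma g12"
  shows "a * g12 + b * g22 = g11 * sigma g11 * g22"
    and "N dvd g11 * sigma (a * g11) + g12 * sigma (a * g12 + b * g22)"
proof -
  show v: "a * g12 + b * g22 = g11 * sigma g11 * g22"
    by (simp add: a_def b_def algebra_simps)
  have "g11 * sigma (a * g11) + g12 * sigma (a * g12 + b * g22)
      = sigma g22 * sigma g11 * (g12 * (sigma (sigma g11) - g11) - g11 * (sigma (sigma g12) - g12))"
    unfolding v by (simp add: a_def sigma_mult sigma_minus algebra_simps)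
  moreover have "N dvd g12 * (sigma (sigma g11) - g11) - g11 * (sigma (sigma g12) - g12)"
    by (rule dvd_diff; rule dvd_mult; rule N_dvd_sigma_sigma)
  ultimately show "N dvd g11 * sigma (a * g11) + g12 * sigma (a * g12 + b * g22)"
    by (simp only: dvd_mult)
qed

text \<open>Multiplying \<open>(a, b)\<close> by the cofactor \<open>N div f\<close> multiplies both hull congruences by
  \<open>sigma (N div f)\<close>, which absorbs every prime component except the one at \<open>bar f\<close>.\<close>

lemma hull_trivial_localize:
  assumes "hull_trivial g11 g12 g22" and "prime f" and "f dvd N"
    and "bar f dvd g11 * sigma (a * g11) + g12 * sigma (a * g12 + b * g22)"
    and "bar f dvd g22 * sigma (a * g12 + b * g22)"
  shows "f dvd a * g11 \<and> f dvd a * g12 + b * g22"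
proof -
  let ?c = "N div f" and ?v = "a * g12 + b * g22"
  have "N dvd sigma ?c * (g11 * sigma (a * g11) + g12 * sigma ?v)"
    and "N dvd sigma ?c * (g22 * sigma ?v)"
    using assms(2-5) by (simp_all add: N_dvd_sigma_cofactor_mult)
  then have "N dvd g11 * sigma ((?c * a) * g11) + g12 * sigma ((?c * a) * g12 + (?c * b) * g22)
           \<and> N dvd g22 * sigma ((?c * a) * g12 + (?c * b) * g22)"
    by (simp add: sigma_mult sigma_add algebra_simps)
  then have "N dvd (?c * a) * g11 \<and> N dvd (?c * a) * g12 + (?c * b) * g22"
    using assms(1) unfolding hull_trivial_def by blast
  moreover have "(?c * a) * g11 = ?c * (a * g11)" and "(?c * a) * g12 + (?c * b) * g22 = ?c * ?v"
    by (simp_all add: algebra_simps)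
  ultimately have "N dvd ?c * (a * g11) \<and> N dvd ?c * ?v"
    by simp
  then have "f dvd ?c * (a * g11) \<and> f dvd ?c * ?v"
    using assms(3) dvd_trans by blast
  then show ?thesis
    using prime_not_dvd_cofactor assms(2,3) prime_dvd_mult_iff by blast
qed

lemma self_conj_recip_iff_bar_closed:
  assumes "h dvd N"
  shows "self_conj_recip q h \<longleftrightarrow> (\<forall>f. prime f \<longrightarrow> f dvd h \<longrightarrow> bar f dvd h)"
proof
  assume "self_conj_recip q h"
  then obtain c where c: "conj_recip q h = smult c h"
    by (auto simp: self_conj_recip_def)
  have "h \<noteq> 0"
    using assms N_nonzero by auto
  then have "c \<noteq> 0"
    using c conj_recip_eq_0_iff[of h] by auto
  show "\<forall>f. prime f \<longrightarrow> f dvd h \<longrightarrow> bar f dvd h"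
  proof (intro allI impI)
    fix f assume "prime f" and "f dvd h"
    have "f dvd N"
      using \<open>f dvd h\<close> assms by (rule dvd_trans)
    then have "bar f dvd conj_recip q h"
      using \<open>prime f\<close> \<open>f dvd h\<close> dvd_conj_recip_iff_bar_dvd[OF prime_bar bar_dvd_N] by (simp add: bar_bar)
    then show "bar f dvd h"
      using c \<open>c \<noteq> 0\<close> by (simp add: dvd_smult_iff)
  qed
next
  assume closed: "\<forall>f. prime f \<longrightarrow> f dvd h \<longrightarrow> bar f dvd h"
  have "h dvd conj_recip q h"
  proof (rule squarefree_dvdI)
    show "squarefree h"
      using assms squarefree_N by (rule squarefree_mono)
    fix f assume "prime f" and "f dvd h"
    moreover from this have "f dvd N"
      using assms by (blast intro: dvd_trans)
    ultimately show "f dvd conj_recip q h"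
      using closed by (simp add: dvd_conj_recip_iff_bar_dvd)
  qed
  then obtain w where w: "conj_recip q h = h * w"
    by (auto elim: dvdE)
  have "h \<noteq> 0"
    using assms N_nonzero by auto
  moreover have "w \<noteq> 0"
    using w \<open>h \<noteq> 0\<close> conj_recip_eq_0_iff[of h] by auto
  moreover have "degree (conj_recip q h) = degree h"
    using assms by (simp add: degree_conj_recip coeff_0_nonzero_if_dvd_N)
  ultimately have "degree w = 0"
    using w by (simp add: degree_mult_eq)
  then obtain c where "w = [:c:]"
    by (rule degree_eq_zeroE)
  then have "conj_recip q h = smult c h"
    using w by simp
  then show "self_conj_recip q h"
    by (auto simp: self_conj_recip_def)
qed

context
  fixes g11 g12 g22 :: "'a poly"
  assumes g11_dvd_N: "g11 dvd N" and g22_dvd_N: "g22 dvd N"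
    and degree_g12_less: "degree g12 < degree g22"
    and g11_g22_dvd: "g11 * g22 dvd N * g12"
begin

abbreviation g :: "'a poly" where "g \<equiv> gcd g11 g22"
abbreviation l :: "'a poly" where "l \<equiv> N div lcm g11 g22"
abbreviation g22' :: "'a poly" where "g22' \<equiv> g22 div g"
abbreviation r22 :: "'a poly" where "r22 \<equiv> gcd g22' (conj_recip q g22')"
abbreviation t22 :: "'a poly" where "t22 \<equiv> g22' div r22"
abbreviation K :: "'a poly" where "K \<equiv> g11 * conj_transpose q m g11 + g12 * conj_transpose q m g12"

lemma N_eq_lcm_mult_l: "N = lcm g11 g22 * l"
  using g11_dvd_N g22_dvd_N by simp

lemma g22_eq: "g22 = g * g22'"
  by simp

lemma g22'_eq: "g22' = r22 * t22"
  by simp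

lemma g22'_dvd_N: "g22' dvd N"
  using g22_dvd_N g22_eq by (metis dvd_mult_right)

lemma prime_dvd_g12_if_dvd_g11_g22:
  assumes "prime f" and "f dvd g11" and "f dvd g22"
  shows "f dvd g12"
proof (rule ccontr)
  assume "\<not> f dvd g12"
  then have "coprime (f ^ 2) g12"
    using assms(1) by (simp add: prime_imp_coprime)
  moreover have "f ^ 2 dvd N * g12"
    using assms(2,3) g11_g22_dvd by (metis power2_eq_square mult_dvd_mono dvd_trans)
  ultimately have "f ^ 2 dvd N"
    using coprime_dvd_mult_left_iff by blast
  then show False
    using squarefree_N assms(1) by (auto dest: squarefreeD)
qed

lemma prime_dvd_l_iff:
  assumes "prime f" and "f dvd N"
  shows "f dvd l \<longleftrightarrow> \<not> f dvd g11 \<and> \<not> f dvd g22"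
proof -
  have "coprime (lcm g11 g22) l"
    using N_eq_lcm_mult_l coprime_if_mult_dvd_N by (metis dvd_refl)
  then have "f dvd l \<longleftrightarrow> \<not> f dvd lcm g11 g22"
    using assms N_eq_lcm_mult_l prime_dvd_coprime_factor_iff by metis
  moreover have "f dvd lcm g11 g22 \<longleftrightarrow> f dvd g11 \<or> f dvd g22"
  proof
    assume "f dvd lcm g11 g22"
    moreover have "lcm g11 g22 dvd g11 * g22"
      by (simp add: lcm_least)
    ultimately show "f dvd g11 \<or> f dvd g22"
      using assms(1) prime_dvd_mult_iff dvd_trans by blast
  qed (auto intro: dvd_trans dvd_lcm1 dvd_lcm2)
  ultimately show ?thesis
    by blast
qed

lemma prime_dvd_g22'_iff:
  assumes "prime f"
  shows "f dvd g22' \<longleftrightarrow> f dvd g22 \<and> \<not> f dvd g11"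
proof -
  have "coprime g g22'"
    using g22_dvd_N g22_eq coprime_if_mult_dvd_N by metis
  moreover have "f dvd g22" if "f dvd g22'"
    using that g22_eq by (metis dvd_mult2 mult.commute)
  ultimately have "f dvd g22' \<longleftrightarrow> f dvd g22 \<and> \<not> f dvd g"
    using assms g22_eq prime_dvd_coprime_factor_iff by metis
  then show ?thesis
    by auto
qed

lemma prime_dvd_r22_iff:
  assumes "prime f" and "f dvd N"
  shows "f dvd r22 \<longleftrightarrow> f dvd g22' \<and> bar f dvd g22'"
  using assms by (simp add: dvd_conj_recip_iff_bar_dvd)

lemma prime_dvd_t22_iff:
  assumes "prime f" and "f dvd N"
  shows "f dvd t22 \<longleftrightarrow> f dvd g22' \<and> \<not> bar f dvd g22'"
proof -
  have "coprime r22 t22"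
    using g22'_dvd_N g22'_eq coprime_if_mult_dvd_N by metis
  moreover have "f dvd g22'" if "f dvd t22"
    using that g22'_eq by (metis dvd_mult2 mult.commute)
  ultimately have "f dvd t22 \<longleftrightarrow> f dvd g22' \<and> \<not> f dvd r22"
    using assms(1) g22'_eq prime_dvd_coprime_factor_iff by metis
  then show ?thesis
    using prime_dvd_r22_iff[OF assms] by blast
qed

lemma dvd_K_iff:
  assumes "d dvd N"
  shows "d dvd K \<longleftrightarrow> d dvd g11 * sigma g11 + g12 * sigma g12"
proof (rule dvd_iff_if_dvd_N[OF assms])
  have "degree g11 \<le> m" and "degree g22 \<le> m"
    using g11_dvd_N g22_dvd_N N_nonzero degree_N by (metis dvd_imp_degree_le)+
  then have "N dvd conj_transpose q m g11 - sigma g11" and "N dvd conj_transpose q m g12 - sigma g12"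
    using degree_g12_less by (simp_all add: conj_transpose_cong_sigma)
  moreover have "K - (g11 * sigma g11 + g12 * sigma g12)
      = g11 * (conj_transpose q m g11 - sigma g11) + g12 * (conj_transpose q m g12 - sigma g12)"
    by (simp add: algebra_simps)
  ultimately show "N dvd K - (g11 * sigma g11 + g12 * sigma g12)"
    by (metis dvd_add dvd_mult)
qed

lemma bar_dvd_g_if_hull_trivial:
  assumes "hull_trivial g11 g12 g22" and "prime f" and "f dvd g"
  shows "bar f dvd g"
proof -
  have "f dvd N"
    using assms(3) g11_dvd_N by (meson dvd_trans gcd_dvd1)
  note bar = prime_bar[OF assms(2) this] bar_dvd_N[OF assms(2) this] bar_bar[OF assms(2) this]
  have "f dvd g11" and "f dvd g22" and "f dvd g12"
    using assms(2,3) prime_dvd_g12_if_dvd_g11_g22 by auto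
  then have "bar f dvd 0 * g11 \<and> bar f dvd 0 * g12 + 1 * g22"
    by (intro hull_trivial_localize[OF assms(1) bar(1,2)]) (simp_all add: bar(3))
  moreover have "bar f dvd 1 * g11 \<and> bar f dvd 1 * g12 + 0 * g22"
    using \<open>f dvd g11\<close> \<open>f dvd g22\<close> \<open>f dvd g12\<close>
    by (intro hull_trivial_localize[OF assms(1) bar(1,2)]) (simp_all add: bar(3))
  ultimately show ?thesis
    by simp
qed

lemma bar_dvd_l_if_hull_trivial:
  assumes "hull_trivial g11 g12 g22" and "prime f" and "f dvd l"
  shows "bar f dvd l"
proof -
  have "f dvd N"
    using assms(3) N_eq_lcm_mult_l by (metis dvd_mult2 mult.commute)
  note bar = prime_bar[OF assms(2) this] bar_dvd_N[OF assms(2) this] bar_bar[OF assms(2) this]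
  have not_dvd: "\<not> f dvd g11" "\<not> f dvd g22"
    using assms(2,3) \<open>f dvd N\<close> prime_dvd_l_iff by auto
  have "\<not> bar f dvd g11"
  proof
    assume "bar f dvd g11"
    then have "f dvd g22 * g11 \<and> f dvd g22 * g12 + (- g12) * g22"
      by (intro hull_trivial_localize[OF assms(1,2) \<open>f dvd N\<close>]) simp_all
    then show False
      using not_dvd assms(2) prime_dvd_mult_iff by blast
  qed
  moreover have "\<not> bar f dvd g22"
  proof
    assume "bar f dvd g22"
    let ?a = "- g22 * sigma g12" and ?b = "g11 * sigma g11 + g12 * sigma g12"
    have "bar f dvd g11 * sigma (?a * g11) + g12 * sigma (?a * g12 + ?b * g22)"
      using hull_congruence_witness(2) bar(2) by (rule dvd_trans[rotated])
    moreover have "bar f dvd g22 * sigma (?a * g12 + ?b * g22)"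
      using \<open>bar f dvd g22\<close> by simp
    ultimately have "f dvd ?a * g12 + ?b * g22"
      using hull_trivial_localize[OF assms(1,2) \<open>f dvd N\<close>] by blast
    then have "f dvd g11 * sigma g11 * g22"
      by (simp only: hull_congruence_witness(1))
    then have "f dvd g11 \<or> f dvd sigma g11 \<or> f dvd g22"
      using assms(2) by (simp add: prime_dvd_mult_iff)
    then show False
      using not_dvd \<open>\<not> bar f dvd g11\<close> dvd_sigma_iff_bar_dvd[OF assms(2) \<open>f dvd N\<close>] by blast
  qed
  ultimately show ?thesis
    using prime_dvd_l_iff[OF bar(1,2)] by blast
qed

lemma not_dvd_g12_if_hull_trivial:
  assumes "hull_trivial g11 g12 g22" and "prime f" and "f dvd t22"
  shows "\<not> f dvd g12"
proof
  assume "f dvd g12"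
  have "f dvd N"
    using assms(3) g22'_eq g22'_dvd_N by (metis dvd_mult dvd_trans dvd_refl)
  note bar = prime_bar[OF assms(2) this] bar_dvd_N[OF assms(2) this] bar_bar[OF assms(2) this]
  have "f dvd g22'" and "\<not> bar f dvd g22'"
    using assms(2,3) \<open>f dvd N\<close> prime_dvd_t22_iff by auto
  then have "f dvd g22" and "\<not> f dvd g11"
    using assms(2) prime_dvd_g22'_iff by auto
  show False
  proof (cases "bar f dvd g22")
    case True
    then have "bar f dvd g"
      using \<open>\<not> bar f dvd g22'\<close> prime_dvd_g22'_iff[OF bar(1)] by simp
    then show False
      using bar_dvd_g_if_hull_trivial[OF assms(1) bar(1)] \<open>\<not> f dvd g11\<close> by (simp add: bar(3))
  next
    case False
    have "bar f dvd 0 * g11 \<and> bar f dvd 0 * g12 + 1 * g22"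
      using \<open>f dvd g12\<close> \<open>f dvd g22\<close> by (intro hull_trivial_localize[OF assms(1) bar(1,2)]) (simp_all add: bar(3))
    then show False
      using False by simp
  qed
qed

lemma not_dvd_K_if_hull_trivial:
  assumes "hull_trivial g11 g12 g22" and "prime f" and "f dvd r22"
  shows "\<not> f dvd K"
proof
  assume "f dvd K"
  have "f dvd N"
    using assms(3) g22'_dvd_N by (meson dvd_trans gcd_dvd1)
  note bar = prime_bar[OF assms(2) this] bar_dvd_N[OF assms(2) this] bar_bar[OF assms(2) this]
  have "f dvd g22'" and "bar f dvd g22'"
    using assms(2,3) \<open>f dvd N\<close> prime_dvd_r22_iff by auto
  then have "f dvd g22" and "\<not> bar f dvd g11"
    using assms(2) bar(1) prime_dvd_g22'_iff by auto
  moreover have "f dvd g11 * sigma g11 + g12 * sigma g12"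
    using \<open>f dvd K\<close> dvd_K_iff \<open>f dvd N\<close> by blast
  ultimately have "bar f dvd 1 * g11 \<and> bar f dvd 1 * g12 + 0 * g22"
    by (intro hull_trivial_localize[OF assms(1) bar(1,2)]) (simp_all add: bar(3))
  then show False
    using \<open>\<not> bar f dvd g11\<close> by simp
qed

context
  fixes a b f :: "'a poly"
  assumes g_closed: "\<forall>f. prime f \<longrightarrow> f dvd g \<longrightarrow> bar f dvd g"
    and l_closed: "\<forall>f. prime f \<longrightarrow> f dvd l \<longrightarrow> bar f dvd l"
    and t22_g12: "\<forall>f. prime f \<longrightarrow> f dvd t22 \<longrightarrow> \<not> f dvd g12"
    and r22_K: "\<forall>f. prime f \<longrightarrow> f dvd r22 \<longrightarrow> \<not> f dvd K"
    and prime_f: "prime f" and f_dvd_N: "f dvd N"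
    and first_cong: "bar f dvd g11 * sigma (a * g11) + g12 * sigma (a * g12 + b * g22)"
    and second_cong: "bar f dvd g22 * sigma (a * g12 + b * g22)"
begin

lemma prime_bar_f: "prime (bar f)" and bar_f_dvd_N: "bar f dvd N" and bar_bar_f: "bar (bar f) = f"
  using prime_f f_dvd_N by (simp_all add: prime_bar bar_dvd_N bar_bar)

lemma not_bar_dvd_g11_and_g22:
  assumes "\<not> f dvd g11 \<or> \<not> f dvd g22"
  shows "\<not> bar f dvd g11 \<or> \<not> bar f dvd g22"
proof -
  have "\<not> f dvd g"
    using assms by simp
  then have "\<not> bar f dvd g"
    using g_closed prime_bar_f bar_bar_f by metis
  then show ?thesis
    by simp
qed

lemma dvd_codeword_if_not_bar_dvd_g22:
  "\<not> bar f dvd g22 \<Longrightarrow> f dvd a * g12 + b * g22"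
  using second_cong prime_bar_f prime_f f_dvd_N by (simp add: prime_dvd_mult_iff bar_dvd_sigma_iff)

lemma dvd_codeword_if_dvd_g11:
  assumes "f dvd g11"
  shows "f dvd a * g11 \<and> f dvd a * g12 + b * g22"
proof (cases "f dvd g22")
  case True
  then show ?thesis
    using assms prime_f prime_dvd_g12_if_dvd_g11_g22 by simp
next
  case False
  have "f dvd a * g12 + b * g22"
  proof (cases "bar f dvd g22")
    case True
    have "\<not> bar f dvd g11"
      using True False not_bar_dvd_g11_and_g22 by blast
    then have "bar f dvd g22'"
      using True prime_dvd_g22'_iff[OF prime_bar_f] by blast
    moreover have "\<not> f dvd g22'"
      using assms prime_dvd_g22'_iff[OF prime_f] by blast
    ultimately have "bar f dvd t22"
      unfolding prime_dvd_t22_iff[OF prime_bar_f bar_f_dvd_N] bar_bar_f ..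
    then have "\<not> bar f dvd g12"
      using t22_g12 prime_bar_f by blast
    moreover have "bar f dvd g11 * sigma (a * g11)"
      using assms prime_f f_dvd_N by (simp add: bar_dvd_sigma_iff)
    then have "bar f dvd g12 * sigma (a * g12 + b * g22)"
      using first_cong by (simp add: dvd_add_right_iff)
    ultimately show ?thesis
      using prime_bar_f prime_f f_dvd_N by (simp add: prime_dvd_mult_iff bar_dvd_sigma_iff)
  qed (rule dvd_codeword_if_not_bar_dvd_g22)
  then show ?thesis
    using assms by simp
qed

lemma dvd_codeword_if_coprime:
  assumes "\<not> f dvd g11" and "\<not> f dvd g22"
  shows "f dvd a * g11 \<and> f dvd a * g12 + b * g22"
proof -
  have "bar f dvd l"
    using assms l_closed prime_f f_dvd_N prime_dvd_l_iff by blast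
  then have "\<not> bar f dvd g11" and "\<not> bar f dvd g22"
    using prime_dvd_l_iff[OF prime_bar_f bar_f_dvd_N] by auto
  have "f dvd a * g12 + b * g22"
    using \<open>\<not> bar f dvd g22\<close> by (rule dvd_codeword_if_not_bar_dvd_g22)
  moreover from this have "bar f dvd g11 * sigma (a * g11)"
    using first_cong prime_f f_dvd_N by (simp add: bar_dvd_sigma_iff dvd_add_left_iff)
  then have "f dvd a * g11"
    using \<open>\<not> bar f dvd g11\<close> prime_bar_f prime_f f_dvd_N by (simp add: prime_dvd_mult_iff bar_dvd_sigma_iff)
  ultimately show ?thesis
    by simp
qed

lemma dvd_a_if_bar_dvd_g11:
  assumes "\<not> f dvd g11" and "f dvd g22" and "bar f dvd g11"
  shows "f dvd a"
proof -
  have "\<not> bar f dvd g22"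
    using assms(1,3) not_bar_dvd_g11_and_g22 by blast
  then have "f dvd a * g12"
    using dvd_codeword_if_not_bar_dvd_g22 assms(2) by (simp add: dvd_add_left_iff)
  moreover have "f dvd g22'" and "\<not> bar f dvd g22'"
    using assms prime_f prime_bar_f by (simp_all add: prime_dvd_g22'_iff)
  then have "f dvd t22"
    unfolding prime_dvd_t22_iff[OF prime_f f_dvd_N] by blast
  then have "\<not> f dvd g12"
    using t22_g12 prime_f by blast
  ultimately show ?thesis
    using prime_f by (simp add: prime_dvd_mult_iff)
qed

lemma dvd_a_if_not_bar_dvd_g11:
  assumes "\<not> f dvd g11" and "f dvd g22" and "\<not> bar f dvd g11"
  shows "f dvd a"
proof -
  have "bar f dvd g22"
  proof (rule ccontr)
    assume "\<not> bar f dvd g22"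
    then have "bar f dvd l"
      using assms(3) prime_dvd_l_iff[OF prime_bar_f bar_f_dvd_N] by simp
    then have "f dvd l"
      using l_closed prime_bar_f by (metis bar_bar_f)
    then show False
      using assms(2) prime_dvd_l_iff[OF prime_f f_dvd_N] by simp
  qed
  then have "bar f dvd g22'" and "f dvd g22'"
    using assms prime_f prime_bar_f by (simp_all add: prime_dvd_g22'_iff)
  then have "bar f dvd r22"
    unfolding prime_dvd_r22_iff[OF prime_bar_f bar_f_dvd_N] bar_bar_f ..
  then have not_dvd: "\<not> bar f dvd g11 * sigma g11 + g12 * sigma g12"
    using r22_K prime_bar_f bar_f_dvd_N dvd_K_iff by blast
  have "g11 * sigma (a * g11) + g12 * sigma (a * g12 + b * g22)
      = sigma a * (g11 * sigma g11 + g12 * sigma g12) + g12 * sigma b * sigma g22"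
    by (simp add: sigma_mult sigma_add algebra_simps)
  then have "bar f dvd sigma a * (g11 * sigma g11 + g12 * sigma g12) + g12 * sigma b * sigma g22"
    using first_cong by simp
  moreover have "bar f dvd g12 * sigma b * sigma g22"
    using assms(2) prime_f f_dvd_N by (simp add: bar_dvd_sigma_iff)
  ultimately have "bar f dvd sigma a * (g11 * sigma g11 + g12 * sigma g12)"
    by (simp add: dvd_add_left_iff)
  then have "bar f dvd sigma a"
    using not_dvd prime_bar_f prime_dvd_mult_iff by blast
  then show ?thesis
    using prime_f f_dvd_N by (simp add: bar_dvd_sigma_iff)
qed

lemma dvd_codeword_if_dvd_g22:
  assumes "\<not> f dvd g11" and "f dvd g22"
  shows "f dvd a * g11 \<and> f dvd a * g12 + b * g22"
proof -
  have "f dvd a"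
    using assms dvd_a_if_bar_dvd_g11 dvd_a_if_not_bar_dvd_g11 by blast
  then show ?thesis
    using assms(2) by simp
qed

lemma dvd_codeword_if_conditions: "f dvd a * g11 \<and> f dvd a * g12 + b * g22"
  using dvd_codeword_if_dvd_g11 dvd_codeword_if_coprime dvd_codeword_if_dvd_g22 by blast

end

lemma hull_trivial_if_local_conditions:
  assumes closed_g: "\<forall>f. prime f \<longrightarrow> f dvd g \<longrightarrow> bar f dvd g"
    and closed_l: "\<forall>f. prime f \<longrightarrow> f dvd l \<longrightarrow> bar f dvd l"
    and t22_g12: "\<forall>f. prime f \<longrightarrow> f dvd t22 \<longrightarrow> \<not> f dvd g12"
    and r22_K: "\<forall>f. prime f \<longrightarrow> f dvd r22 \<longrightarrow> \<not> f dvd K"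
  shows "hull_trivial g11 g12 g22"
  unfolding hull_trivial_def
proof (intro allI impI conjI)
  fix a b
  assume congs: "N dvd g11 * sigma (a * g11) + g12 * sigma (a * g12 + b * g22)
    \<and> N dvd g22 * sigma (a * g12 + b * g22)"
  have local: "f dvd a * g11 \<and> f dvd a * g12 + b * g22" if "prime f" and "f dvd N" for f
    using dvd_codeword_if_conditions[OF closed_g closed_l t22_g12 r22_K that]
      congs bar_dvd_N[OF that] dvd_trans by blast
  show "N dvd a * g11" and "N dvd a * g12 + b * g22"
    using local by (auto intro: squarefree_dvdI[OF squarefree_N])
qed

lemma hull_trivial_iff_conditions:
  "hull_trivial g11 g12 g22 \<longleftrightarrow>
     self_conj_recip q g \<and> self_conj_recip q l \<and> gcd t22 g12 = 1 \<and> gcd r22 K = 1"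
proof -
  have "g dvd N"
    using gcd_dvd1 g11_dvd_N by (rule dvd_trans)
  have "l dvd N"
    using N_eq_lcm_mult_l dvd_triv_right by metis
  have "r22 dvd N"
    using gcd_dvd1 g22'_dvd_N by (rule dvd_trans)
  have "t22 dvd g22'"
    using g22'_eq dvd_triv_right by metis
  then have "t22 dvd N"
    using g22'_dvd_N by (rule dvd_trans)
  have scr_g: "self_conj_recip q g \<longleftrightarrow> (\<forall>f. prime f \<longrightarrow> f dvd g \<longrightarrow> bar f dvd g)"
    by (rule self_conj_recip_iff_bar_closed[OF \<open>g dvd N\<close>])
  have scr_l: "self_conj_recip q l \<longleftrightarrow> (\<forall>f. prime f \<longrightarrow> f dvd l \<longrightarrow> bar f dvd l)"
    by (rule self_conj_recip_iff_bar_closed[OF \<open>l dvd N\<close>])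
  have coprime_t22: "gcd t22 g12 = 1 \<longleftrightarrow> (\<forall>f. prime f \<longrightarrow> f dvd t22 \<longrightarrow> \<not> f dvd g12)"
    unfolding coprime_iff_gcd_eq_1[symmetric]
    using \<open>t22 dvd N\<close> N_nonzero by (intro coprime_iff_no_common_prime_divisor) auto
  have coprime_r22: "gcd r22 K = 1 \<longleftrightarrow> (\<forall>f. prime f \<longrightarrow> f dvd r22 \<longrightarrow> \<not> f dvd K)"
    unfolding coprime_iff_gcd_eq_1[symmetric]
    using \<open>r22 dvd N\<close> N_nonzero by (intro coprime_iff_no_common_prime_divisor) auto
  show ?thesis
    unfolding scr_g scr_l coprime_t22 coprime_r22
  proof (intro iffI conjI allI impI; (elim conjE)?)
    fix f :: "'a poly"
    assume trivial: "hull_trivial g11 g12 g22" and "prime f"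
    show "f dvd g \<Longrightarrow> bar f dvd g"
      by (rule bar_dvd_g_if_hull_trivial[OF trivial \<open>prime f\<close>])
    show "f dvd l \<Longrightarrow> bar f dvd l"
      by (rule bar_dvd_l_if_hull_trivial[OF trivial \<open>prime f\<close>])
    show "f dvd t22 \<Longrightarrow> \<not> f dvd g12"
      by (rule not_dvd_g12_if_hull_trivial[OF trivial \<open>prime f\<close>])
    show "f dvd r22 \<Longrightarrow> \<not> f dvd K"
      by (rule not_dvd_K_if_hull_trivial[OF trivial \<open>prime f\<close>])
  qed (rule hull_trivial_if_local_conditions)
qed

end

end

theorem theorem6p3:
  fixes q m p e :: nat
    and g11 g12 g22 :: "'a::{finite, field_gcd} poly"
  assumes "prime p" and "e \<ge> 1" and "q = p ^ e"
    and "card (UNIV :: 'a set) = q ^ 2"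
    and "m \<ge> 1" and "coprime q m"
    and "g11 dvd xm1 m" and "g22 dvd xm1 m"
    and "degree g12 < degree g22"
    and "g11 * g22 dvd xm1 m * g12"
  shows "herm_LCD q m (qc_code m g11 g12 g22) \<longleftrightarrow>
    (let g = gcd g11 g22;
         l = xm1 m div lcm g11 g22;
         g11' = g11 div g;
         g22' = g22 div g;
         r22 = gcd g22' (conj_recip q g22');
         t22 = g22' div r22
     in self_conj_recip q g
        \<and> self_conj_recip q l
        \<and> gcd t22 g12 = 1
        \<and> gcd r22 (g11 * conj_transpose q m g11 + g12 * conj_transpose q m g12) = 1)"
proof -
  have "CHAR('a) = p"
    using assms(1,3,4) by (intro CHAR_finite_field_prime_power[where k = "e * 2"]) (simp_all add: power_mult)
  then have "q = CHAR('a) ^ e" and "coprime CHAR('a) m"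
    using assms(2,3,6) by simp_all
  then interpret hermitian_qc q m "TYPE('a)"
    using frobenius_conjugation[of q e] assms(4) of_nat_nonzero_if_coprime_CHAR
    by unfold_locales auto
  show ?thesis
    unfolding Let_def herm_LCD_iff_hull_trivial
    by (rule hull_trivial_iff_conditions[OF assms(7-10)])
qed

end
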